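(* In the pBeeGees protocol (setting described in the context), if a correct process $p$ enters view $v$, then for every view $v'<v$ some correct process has entered view $v'$.
   Context: Setting (pBeeGees view synchronization). $n=3f+1$ processes, at most $f$ Byzantine, the rest correct; partial synchrony with bound $\Delta$ after GST. Views $v=1,2,\dots$ with leaders $l_v$. A process enters view $v+1$ only upon obtaining either a quorum certificate (QC: $n-f$ votes from distinct processes for the block of view $v$) or a timeout certificate (TC: $n-f$ timeout messages for view $v$ from distinct processes). A correct process in view $v$ that has not advanced after waiting time $F(v)$ times out and broadcasts a timeout message for view $v$; a correct process that receives $f+1$ timeout messages for view $v$ also broadcasts its own timeout message for view $v$. *)

theory Defs
  imports Main
begin

text \<open>Time is discrete (nat).
  enters p v t : process p enters view v at time t.
  vote p v t   : process p sends a vote for the block of view v at time t.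
  tmo p v t    : process p sends a timeout message for view v at time t.
  A message sent at time t' can be received/used at any time t > t'.\<close>

definition correct :: "'p set \<Rightarrow> 'p set \<Rightarrow> 'p \<Rightarrow> bool" where
  "correct P Byz p \<longleftrightarrow> p \<in> P \<and> p \<notin> Byz"

definition has_QC :: "'p set \<Rightarrow> nat \<Rightarrow> ('p \<Rightarrow> nat \<Rightarrow> nat \<Rightarrow> bool) \<Rightarrow> nat \<Rightarrow> nat \<Rightarrow> bool" where
  "has_QC P f vote v t \<longleftrightarrow> 2 * f + 1 \<le> card {q \<in> P. \<exists>t'<t. vote q v t'}"

definition has_TC :: "'p set \<Rightarrow> nat \<Rightarrow> ('p \<Rightarrow> nat \<Rightarrow> nat \<Rightarrow> bool) \<Rightarrow> nat \<Rightarrow> nat \<Rightarrow> bool" where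
  "has_TC P f tmo v t \<longleftrightarrow> 2 * f + 1 \<le> card {q \<in> P. \<exists>t'<t. tmo q v t'}"

definition pbeegees_exec ::
  "'p set \<Rightarrow> 'p set \<Rightarrow> nat \<Rightarrow> (nat \<Rightarrow> nat) \<Rightarrow>
   ('p \<Rightarrow> nat \<Rightarrow> nat \<Rightarrow> bool) \<Rightarrow> ('p \<Rightarrow> nat \<Rightarrow> nat \<Rightarrow> bool) \<Rightarrow> ('p \<Rightarrow> nat \<Rightarrow> nat \<Rightarrow> bool) \<Rightarrow> bool"
where
  "pbeegees_exec P Byz f Fw enters vote tmo \<longleftrightarrow>
     finite P \<and> card P = 3 * f + 1 \<and> Byz \<subseteq> P \<and> card Byz \<le> f \<and>
     \<comment> \<open>views are numbered 1,2,...\<close>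
     (\<forall>p v t. correct P Byz p \<and> enters p v t \<longrightarrow> 1 \<le> v) \<and>
     \<comment> \<open>a correct process enters view v+1 only with a QC or TC for view v\<close>
     (\<forall>p v t. correct P Byz p \<and> enters p (Suc v) t \<and> 1 \<le> v \<longrightarrow>
        has_QC P f vote v t \<or> has_TC P f tmo v t) \<and>
     \<comment> \<open>a correct process votes for the block of view v only while in view v\<close>
     (\<forall>p v t. correct P Byz p \<and> vote p v t \<longrightarrow>
        (\<exists>t0\<le>t. enters p v t0) \<and> (\<forall>w>v. \<forall>t1\<le>t. \<not> enters p w t1)) \<and>
     \<comment> \<open>a correct process sends a timeout for view v only after waiting F(v) in
         view v without advancing, or after receiving f+1 timeouts for view v\<close>
     (\<forall>p v t. correct P Byz p \<and> tmo p v t \<longrightarrow>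
        (\<exists>t0. enters p v t0 \<and> t0 + Fw v \<le> t \<and> (\<forall>w>v. \<forall>t1\<le>t. \<not> enters p w t1))
        \<or> f + 1 \<le> card {q \<in> P. \<exists>t'<t. tmo q v t'})"

end

theory Submission
  imports Defs
begin

text \<open>A QC or TC for view \<open>w\<close> carries \<open>2f+1\<close> signatures, more than the at most \<open>f\<close>
  Byzantine processes, so some correct process voted or timed out in view \<open>w\<close>. A correct
  voter was in view \<open>w\<close>; a correct process that timed out either was in view \<open>w\<close> or had
  received \<open>f+1\<close> earlier timeouts for \<open>w\<close>, one of them from a correct process, and
  induction on the sending time ends this regress. Hence a correct process in view
  \<open>w+1\<close> implies a correct process in view \<open>w\<close>, and descending from \<open>v\<close> reaches
  every \<open>v' < v\<close>.\<close>

lemma ex_correct_if_card_Byz_less: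
  assumes "finite Byz" and "card Byz < card {q \<in> P. Q q}"
  shows "\<exists>q. correct P Byz q \<and> Q q"
proof (rule ccontr)
  assume "\<not> ?thesis"
  then have "{q \<in> P. Q q} \<subseteq> Byz" by (auto simp: correct_def)
  then have "card {q \<in> P. Q q} \<le> card Byz"
    using assms(1) card_mono by blast
  with assms(2) show False by simp
qed

context
  fixes P Byz f Fw enters vote tmo
  assumes exec: "pbeegees_exec P Byz f Fw enters vote tmo"
begin

lemma ex_correct_if_card_ge_Suc_f:
  assumes "f + 1 \<le> card {q \<in> P. Q q}"
  shows "\<exists>q. correct P Byz q \<and> Q q"
proof -
  have "finite Byz" "card Byz \<le> f"
    using exec finite_subset unfolding pbeegees_exec_def by auto
  with assms show ?thesis by (intro ex_correct_if_card_Byz_less) simp_all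
qed

lemma correct_enters_Suc_has_QC_or_TC:
  assumes "correct P Byz p" and "enters p (Suc w) t" and "1 \<le> w"
  shows "has_QC P f vote w t \<or> has_TC P f tmo w t"
  using exec assms unfolding pbeegees_exec_def by (elim conjE) blast

lemma correct_vote_entered:
  assumes "correct P Byz p" and "vote p w t"
  shows "\<exists>t0. enters p w t0"
  using exec assms unfolding pbeegees_exec_def by (elim conjE) blast

lemma correct_tmo_cases:
  assumes "correct P Byz p" and "tmo p w t"
  obtains t0 where "enters p w t0"
  | "f + 1 \<le> card {q \<in> P. \<exists>t'<t. tmo q w t'}"
  using exec assms unfolding pbeegees_exec_def by (elim conjE) blast

lemma correct_tmo_view_entered:
  assumes "correct P Byz p" and "tmo p w t"
  shows "\<exists>q t'. correct P Byz q \<and> enters q w t'"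
  using assms
proof (induction t arbitrary: p rule: less_induct)
  case (less t)
  from less.prems show ?case
  proof (cases rule: correct_tmo_cases)
    case 2
    from ex_correct_if_card_ge_Suc_f[OF this]
    obtain q t' where "correct P Byz q" "t' < t" "tmo q w t'" by blast
    then show ?thesis using less.IH by blast
  qed (use less.prems in blast)
qed

lemma correct_enters_Suc_view_entered:
  assumes "correct P Byz p" and "enters p (Suc w) t" and "1 \<le> w"
  shows "\<exists>q t'. correct P Byz q \<and> enters q w t'"
  using correct_enters_Suc_has_QC_or_TC[OF assms]
proof
  assume "has_QC P f vote w t"
  then have "f + 1 \<le> card {q \<in> P. \<exists>t'<t. vote q w t'}" by (simp add: has_QC_def)
  from ex_correct_if_card_ge_Suc_f[OF this]
  obtain q t' where "correct P Byz q" "vote q w t'" by blast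
  then show ?thesis using correct_vote_entered by blast
next
  assume "has_TC P f tmo w t"
  then have "f + 1 \<le> card {q \<in> P. \<exists>t'<t. tmo q w t'}" by (simp add: has_TC_def)
  from ex_correct_if_card_ge_Suc_f[OF this]
  obtain q t' where "correct P Byz q" "tmo q w t'" by blast
  then show ?thesis using correct_tmo_view_entered by blast
qed

end

theorem lemma6:
  assumes "pbeegees_exec P Byz f Fw enters vote tmo"
    and "correct P Byz p" and "enters p v t"
    and "1 \<le> v'" and "v' < v"
  shows "\<exists>q t'. correct P Byz q \<and> enters q v' t'"
proof -
  have "v' \<le> v" using assms(5) by simp
  then show ?thesis
  proof (induction v' rule: inc_induct)
    case base
    then show ?case using assms(2,3) by blast
  next
    case (step w)
    then show ?case
      using correct_enters_Suc_view_entered[OF assms(1)] assms(4) by fastforce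
  qed
qed

end
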